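(* Let $n\ge 2$ be even. Consider the generalized $n$-gene repressilator system $$\dot r_i = a_i(p_{i-1}) - d_{r_i}(r_i),\qquad \dot p_i = k_i(r_i) - d_{p_i}(p_i),\qquad i=1,\dots,n,$$ (indices mod $n$), with functions satisfying the standing assumptions in the context, and let $x^*=(r_1^*,\dots,r_n^*,p_1^*,\dots,p_n^* )\in(0,\infty)^{2n}$ be a steady state. Then $x^*$ is locally asymptotically stable if and only if $\mathcal{D}>\mathcal{K}$, where $\mathcal{D}$ and $\mathcal{K}$ are evaluated at $x^*$.
   Context: Standing assumptions: each $a_i:[0,\infty)\to\mathbb{R}$ is $C^1$, nonnegative, strictly decreasing, with $a_i(0)>0$; each $d_{r_i}, d_{p_i}, k_i:[0,\infty)\to\mathbb{R}$ is $C^1$, vanishes at $0$, and is strictly increasing on $(0,\infty)$. At $x^*$ define $\partial_i^R := d_{r_i}'(r_i^* )$, $\partial_i^P := d_{p_i}'(p_i^* )$, the total degradation product $\mathcal{D}:=\prod_{i=1}^n \partial_i^R\partial_i^P$, the synthesis products $\mathcal{K}_i := k_i'(r_i^* )\,a_i'(p_{i-1}^* )$, and the total synthesis product $\mathcal{K}:=\prod_{i=1}^n\mathcal{K}_i$. A steady state is called (locally asymptotically) stable if every eigenvalue of the Jacobian matrix of the system at it has negative real part. *)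

theory Defs
  imports "HOL-Analysis.Analysis" "Jordan_Normal_Form.Char_Poly"
begin

definition C1_nonneg :: "(real \<Rightarrow> real) \<Rightarrow> bool" where
  "C1_nonneg f \<longleftrightarrow> (\<exists>f'. continuous_on {0..} f' \<and>
     (\<forall>x\<ge>0. (f has_real_derivative f' x) (at x within {0..})))"

text \<open>State vector of dimension 2n as a function nat => real:
  component i (i < n) is r_(i+1), component n+i (i < n) is p_(i+1).
  Indices 0-based, so p_(i-1) of gene i is component n + ((i + n - 1) mod n).\<close>
definition repressilator_field ::
  "nat \<Rightarrow> (nat \<Rightarrow> real \<Rightarrow> real) \<Rightarrow> (nat \<Rightarrow> real \<Rightarrow> real) \<Rightarrow> (nat \<Rightarrow> real \<Rightarrow> real)
   \<Rightarrow> (nat \<Rightarrow> real \<Rightarrow> real) \<Rightarrow> (nat \<Rightarrow> real) \<Rightarrow> (nat \<Rightarrow> real)" where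
  "repressilator_field n a dr dp k x = (\<lambda>i.
     if i < n then a i (x (n + (i + n - 1) mod n)) - dr i (x i)
     else k (i - n) (x (i - n)) - dp (i - n) (x i))"

definition jacobian :: "nat \<Rightarrow> ((nat \<Rightarrow> real) \<Rightarrow> (nat \<Rightarrow> real)) \<Rightarrow> (nat \<Rightarrow> real) \<Rightarrow> real mat" where
  "jacobian m F x = mat m m (\<lambda>(i, j). deriv (\<lambda>t. F (x(j := t)) i) (x j))"

definition stable_steady_state :: "nat \<Rightarrow> ((nat \<Rightarrow> real) \<Rightarrow> (nat \<Rightarrow> real)) \<Rightarrow> (nat \<Rightarrow> real) \<Rightarrow> bool" where
  "stable_steady_state m F x \<longleftrightarrow>
     (\<forall>e. eigenvalue (map_mat complex_of_real (jacobian m F x)) e \<longrightarrow> Re e < 0)"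

definition total_degradation :: "nat \<Rightarrow> (nat \<Rightarrow> real \<Rightarrow> real) \<Rightarrow> (nat \<Rightarrow> real \<Rightarrow> real) \<Rightarrow> (nat \<Rightarrow> real) \<Rightarrow> real" where
  "total_degradation n dr dp x = (\<Prod>i<n. deriv (dr i) (x i) * deriv (dp i) (x (n + i)))"

definition total_synthesis :: "nat \<Rightarrow> (nat \<Rightarrow> real \<Rightarrow> real) \<Rightarrow> (nat \<Rightarrow> real \<Rightarrow> real) \<Rightarrow> (nat \<Rightarrow> real) \<Rightarrow> real" where
  "total_synthesis n a k x = (\<Prod>i<n. deriv (k i) (x i) * deriv (a i) (x (n + (i + n - 1) mod n)))"

end

(*
  Order the coordinates along the feedback loop r_1, p_1, r_2, p_2, ..., r_n, p_n.  In this
  order the Jacobian at x* is -diag(beta) plus one entry alpha_t coupling each coordinate to its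
  cyclic predecessor, where the beta_t are the degradation derivatives (so beta_t >= 0 and their
  product is D) and the alpha_t are the synthesis derivatives k_i' >= 0 and a_i' <= 0 (so their
  product is K, and K >= 0 because n is even).  The eigenvector equations
  (z + beta_t) u_t = alpha_t u_(t-1) around the cycle have a nonzero solution iff
  prod_t (z + beta_t) = K.  If D > K, an eigenvalue with Re z >= 0 would give
  D <= |prod_t (z + beta_t)| = K; if D <= K, the intermediate value theorem yields a real
  eigenvalue z >= 0.
*)
theory Submission
  imports Defs
begin

section \<open>Cyclic linear systems\<close>

lemma cyclic_pred_mod:
  assumes "0 < (m::nat)"
  shows "(x mod m + m - 1) mod m = (x + m - 1) mod m"
proof -
  have "(x mod m + m - 1) mod m = (x mod m + (m - 1)) mod m" using assms by simp
  also have "\<dots> = (x + (m - 1)) mod m" by (simp add: mod_add_left_eq)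
  finally show ?thesis using assms by simp
qed

lemma cyclic_pred_eq: "t < (m::nat) \<Longrightarrow> (t + m - 1) mod m = (if t = 0 then m - 1 else t - 1)"
proof (cases t)
  case (Suc t')
  assume "t < m"
  then have "t + m - 1 = t' + m" using Suc by simp
  then show ?thesis using Suc \<open>t < m\<close> by simp
qed simp

lemma mod_add_diff_add_mod:
  assumes "c \<le> (m::nat)" "t < m"
  shows "((t + (m - c)) mod m + c) mod m = t"
proof -
  have "((t + (m - c)) mod m + c) mod m = (t + (m - c) + c) mod m" by (simp add: mod_add_left_eq)
  also have "\<dots> = t" using assms by simp
  finally show ?thesis .
qed

lemma prod_lessThan_cyclic_pred:
  assumes "0 < (m::nat)"
  shows "(\<Prod>t<m. f ((t + m - 1) mod m)) = (\<Prod>t<m. f t :: 'a::comm_monoid_mult)"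
proof -
  obtain m' where m: "m = Suc m'" using assms by (cases m) auto
  have "(\<Prod>t<m. f ((t + m - 1) mod m)) = f ((0 + m - 1) mod m) * (\<Prod>t<m'. f ((Suc t + m - 1) mod m))"
    unfolding m by (rule prod.lessThan_Suc_shift)
  also have "(\<Prod>t<m'. f ((Suc t + m - 1) mod m)) = (\<Prod>t<m'. f t)"
  proof (rule prod.cong)
    fix t assume "t \<in> {..<m'}"
    then have "Suc t + m - 1 = t + m" "t < m" by (auto simp: m)
    then show "f ((Suc t + m - 1) mod m) = f t" by simp
  qed simp
  finally show ?thesis by (simp add: m mult.commute)
qed

definition cyclic_solvable :: "nat \<Rightarrow> (nat \<Rightarrow> 'a::field) \<Rightarrow> (nat \<Rightarrow> 'a) \<Rightarrow> bool" where
  "cyclic_solvable m d e \<longleftrightarrow>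
     (\<exists>u. (\<exists>t<m. u t \<noteq> 0) \<and> (\<forall>t<m. d t * u t = e t * u ((t + m - 1) mod m)))"

lemma cyclic_solution_vanishes:
  fixes d e u :: "nat \<Rightarrow> 'a::field"
  assumes d: "\<And>t. t < m \<Longrightarrow> d t \<noteq> 0"
    and u: "\<forall>t<m. d t * u t = e t * u ((t + m - 1) mod m)"
    and s: "s < m" "u s = 0" and "t < m"
  shows "u t = 0"
proof -
  have m: "0 < m" using s by simp
  have "u ((s + j) mod m) = 0" for j
  proof (induction j)
    case 0
    then show ?case using s by simp
  next
    case (Suc j)
    define t' where "t' = (s + Suc j) mod m"
    have "t' < m" using m by (simp add: t'_def)
    have "(t' + m - 1) mod m = (s + Suc j + m - 1) mod m"
      unfolding t'_def by (rule cyclic_pred_mod[OF m])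
    also have "\<dots> = (s + j) mod m" by simp
    finally have "d t' * u t' = 0" using u Suc.IH \<open>t' < m\<close> by simp
    then show ?case using d[OF \<open>t' < m\<close>] by (simp add: t'_def)
  qed
  from this[of "t + m - s"] show ?thesis using s \<open>t < m\<close> by simp
qed

lemma cyclic_solvable_imp_prod_eq:
  fixes d e :: "nat \<Rightarrow> 'a::field"
  assumes "cyclic_solvable m d e" and d: "\<And>t. t < m \<Longrightarrow> d t \<noteq> 0"
  shows "(\<Prod>t<m. d t) = (\<Prod>t<m. e t)"
proof -
  obtain u t0 where "t0 < m" "u t0 \<noteq> 0" and u: "\<forall>t<m. d t * u t = e t * u ((t + m - 1) mod m)"
    using assms(1) unfolding cyclic_solvable_def by blast
  have m: "0 < m" using \<open>t0 < m\<close> by simp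
  have u_nz: "(\<Prod>t<m. u t) \<noteq> 0"
    using cyclic_solution_vanishes[OF d u _ _ \<open>t0 < m\<close>] \<open>u t0 \<noteq> 0\<close> by auto
  have "(\<Prod>t<m. d t) * (\<Prod>t<m. u t) = (\<Prod>t<m. d t * u t)"
    by (simp add: prod.distrib)
  also have "\<dots> = (\<Prod>t<m. e t * u ((t + m - 1) mod m))"
    using u by (intro prod.cong) auto
  also have "\<dots> = (\<Prod>t<m. e t) * (\<Prod>t<m. u t)"
    by (simp only: prod.distrib prod_lessThan_cyclic_pred[OF m])
  finally show ?thesis using u_nz by simp
qed

definition cyclic_chain :: "(nat \<Rightarrow> 'a::field) \<Rightarrow> (nat \<Rightarrow> 'a) \<Rightarrow> nat \<Rightarrow> nat \<Rightarrow> 'a" where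
  "cyclic_chain d e s t = (if t < s then 0 else \<Prod>j\<in>{s<..t}. e j / d j)"

lemma cyclic_chain_step:
  fixes d e :: "nat \<Rightarrow> 'a::field"
  assumes "0 < t" and "s < t \<Longrightarrow> d t \<noteq> 0" and "t = s \<Longrightarrow> d t = 0"
  shows "d t * cyclic_chain d e s t = e t * cyclic_chain d e s (t - 1)"
proof -
  consider "t < s" | "t = s" | "s < t" by linarith
  then show ?thesis
  proof cases
    case 1
    then show ?thesis by (simp add: cyclic_chain_def)
  next
    case 2
    then show ?thesis using assms by (simp add: cyclic_chain_def)
  next
    case 3
    then have "{s<..t} = insert t {s<..t - 1}" by auto
    moreover have "\<not> t - 1 < s" using 3 by simp
    ultimately have "cyclic_chain d e s t = e t / d t * cyclic_chain d e s (t - 1)"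
      using 3 by (simp add: cyclic_chain_def)
    then show ?thesis using assms(2)[OF 3] by simp
  qed
qed

lemma cyclic_solvable_if_nonzero_diag:
  fixes d e :: "nat \<Rightarrow> 'a::field"
  assumes m: "0 < m" and d: "\<And>t. t < m \<Longrightarrow> d t \<noteq> 0"
    and prod_eq: "(\<Prod>t<m. d t) = (\<Prod>t<m. e t)"
  shows "cyclic_solvable m d e"
proof -
  define u where "u = cyclic_chain d e 0"
  have chain: "d t * u t = e t * u (t - 1)" if "0 < t" "t < m" for t
    unfolding u_def using that d by (intro cyclic_chain_step) auto
  have split: "(\<Prod>t<m. f t) = f 0 * (\<Prod>t\<in>{0<..m - 1}. f t)" for f :: "nat \<Rightarrow> 'a"
  proof -
    have "{..<m} = insert 0 {0<..m - 1}" using m by auto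
    then show ?thesis by simp
  qed
  have nz: "(\<Prod>t\<in>{0<..m - 1}. d t) \<noteq> 0" using d by auto
  have "d 0 * (\<Prod>t\<in>{0<..m - 1}. d t) = e 0 * (\<Prod>t\<in>{0<..m - 1}. e t)"
    using prod_eq unfolding split .
  then have "d 0 * u 0 = e 0 * u (m - 1)"
    using nz by (simp add: u_def cyclic_chain_def prod_dividef field_simps)
  then have "\<forall>t<m. d t * u t = e t * u ((t + m - 1) mod m)"
    using chain cyclic_pred_eq m by auto
  moreover have "u 0 \<noteq> 0" by (simp add: u_def cyclic_chain_def)
  ultimately show ?thesis unfolding cyclic_solvable_def using m by blast
qed

lemma cyclic_solvable_if_first_coeff_zero:
  fixes d e :: "nat \<Rightarrow> 'a::field"
  assumes e0: "e 0 = 0" and "s0 < m" "d s0 = 0"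
  shows "cyclic_solvable m d e"
proof -
  \<comment> \<open>The solution starts at the last zero of \<open>d\<close>; it closes up at \<open>t = 0\<close> because \<open>e 0 = 0\<close>.\<close>
  define s where "s = Max {t. t < m \<and> d t = 0}"
  have "s \<in> {t. t < m \<and> d t = 0}"
    unfolding s_def using assms by (intro Max_in) auto
  then have s: "s < m" "d s = 0" by auto
  have d: "d t \<noteq> 0" if "s < t" "t < m" for t
    using that Max_ge[of "{t. t < m \<and> d t = 0}" t] unfolding s_def by fastforce
  define u where "u = cyclic_chain d e s"
  have chain: "d t * u t = e t * u (t - 1)" if "0 < t" "t < m" for t
    unfolding u_def using that d s(2) by (intro cyclic_chain_step) auto
  have "d 0 * u 0 = 0" using s(2) by (cases "s = 0") (auto simp: u_def cyclic_chain_def)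
  then have "\<forall>t<m. d t * u t = e t * u ((t + m - 1) mod m)"
    using chain cyclic_pred_eq e0 by auto
  moreover have "u s \<noteq> 0" by (simp add: u_def cyclic_chain_def)
  ultimately show ?thesis unfolding cyclic_solvable_def using s(1) by blast
qed

lemma cyclic_solvable_rotate:
  fixes d e :: "nat \<Rightarrow> 'a::field"
  assumes "c < m" and "cyclic_solvable m (\<lambda>t. d ((t + c) mod m)) (\<lambda>t. e ((t + c) mod m))"
  shows "cyclic_solvable m d e"
proof -
  obtain u t1 where t1: "t1 < m" "u t1 \<noteq> 0"
    and u: "\<forall>t<m. d ((t + c) mod m) * u t = e ((t + c) mod m) * u ((t + m - 1) mod m)"
    using assms(2) unfolding cyclic_solvable_def by blast
  have m: "0 < m" using t1 by simp
  define r where "r t = (t + (m - c)) mod m" for t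
  have r_lt: "r t < m" for t using m by (simp add: r_def)
  have r_rot: "(r t + c) mod m = t" if "t < m" for t
    unfolding r_def using mod_add_diff_add_mod \<open>c < m\<close> that by simp
  have r_pred: "(r t + m - 1) mod m = r ((t + m - 1) mod m)" for t
  proof -
    have "(r t + m - 1) mod m = (t + (m - c) + m - 1) mod m"
      unfolding r_def by (rule cyclic_pred_mod[OF m])
    also have "\<dots> = (t + m - 1 + (m - c)) mod m" using m by (simp add: algebra_simps)
    also have "\<dots> = r ((t + m - 1) mod m)" by (simp add: r_def mod_add_left_eq)
    finally show ?thesis .
  qed
  have "r ((t1 + c) mod m) = t1"
  proof -
    have "r ((t1 + c) mod m) = (t1 + c + (m - c)) mod m" by (simp add: r_def mod_add_left_eq)
    also have "\<dots> = t1" using t1 \<open>c < m\<close> by simp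
    finally show ?thesis .
  qed
  show ?thesis unfolding cyclic_solvable_def
  proof (intro exI[of _ "\<lambda>t. u (r t)"] conjI allI impI)
    show "\<exists>t<m. u (r t) \<noteq> 0"
      using \<open>r ((t1 + c) mod m) = t1\<close> t1 m by (metis mod_less_divisor)
  next
    fix t assume "t < m"
    from u[rule_format, OF r_lt[of t]]
    show "d t * u (r t) = e t * u (r ((t + m - 1) mod m))"
      unfolding r_rot[OF \<open>t < m\<close>] r_pred .
  qed
qed

lemma cyclic_solvable_if_prod_eq:
  fixes d e :: "nat \<Rightarrow> 'a::field"
  assumes m: "0 < m" and prod_eq: "(\<Prod>t<m. d t) = (\<Prod>t<m. e t)"
  shows "cyclic_solvable m d e"
proof (cases "\<forall>t<m. d t \<noteq> 0")
  case True
  then show ?thesis using cyclic_solvable_if_nonzero_diag[OF m _ prod_eq] by blast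
next
  case False
  then obtain s0 where s0: "s0 < m" "d s0 = 0" by blast
  then have "(\<Prod>t<m. d t) = 0" by auto
  then have "(\<Prod>t<m. e t) = 0" using prod_eq by simp
  then obtain t0 where t0: "t0 < m" "e t0 = 0" by auto
  have "d (((s0 + (m - t0)) mod m + t0) mod m) = 0"
    using mod_add_diff_add_mod[of t0 m s0] s0 t0 by simp
  then have "cyclic_solvable m (\<lambda>t. d ((t + t0) mod m)) (\<lambda>t. e ((t + t0) mod m))"
    using t0 m by (intro cyclic_solvable_if_first_coeff_zero) auto
  then show ?thesis using cyclic_solvable_rotate t0(1) by blast
qed

section \<open>Matrices with a single feedback cycle\<close>

definition feedback_mat :: "nat \<Rightarrow> (nat \<Rightarrow> nat) \<Rightarrow> (nat \<Rightarrow> real) \<Rightarrow> (nat \<Rightarrow> real) \<Rightarrow> real mat" where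
  "feedback_mat m \<sigma> \<alpha> \<beta> =
     mat m m (\<lambda>(i, j). (if j = \<sigma> i then \<alpha> i else 0) - (if j = i then \<beta> i else 0))"

lemma feedback_mat_mult_vec:
  assumes "v \<in> carrier_vec m" "i < m" "\<sigma> i < m"
  shows "(map_mat complex_of_real (feedback_mat m \<sigma> \<alpha> \<beta>) *\<^sub>v v) $ i =
           of_real (\<alpha> i) * v $ \<sigma> i - of_real (\<beta> i) * v $ i"
proof -
  have "(map_mat complex_of_real (feedback_mat m \<sigma> \<alpha> \<beta>) *\<^sub>v v) $ i =
          (\<Sum>j<m. of_real ((if j = \<sigma> i then \<alpha> i else 0) - (if j = i then \<beta> i else 0)) * v $ j)"
    using assms by (simp add: feedback_mat_def scalar_prod_def atLeast0LessThan)
  also have "\<dots> = (\<Sum>j<m. (if j = \<sigma> i then of_real (\<alpha> i) * v $ j else 0)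
                         - (if j = i then of_real (\<beta> i) * v $ j else 0))"
    by (intro sum.cong) (auto simp: algebra_simps)
  also have "\<dots> = of_real (\<alpha> i) * v $ \<sigma> i - of_real (\<beta> i) * v $ i"
    using assms by (simp add: sum_subtractf)
  finally show ?thesis .
qed

lemma feedback_mat_eigen_equation_iff:
  assumes "v \<in> carrier_vec m" and \<sigma>: "\<And>i. i < m \<Longrightarrow> \<sigma> i < m"
  shows "map_mat complex_of_real (feedback_mat m \<sigma> \<alpha> \<beta>) *\<^sub>v v = z \<cdot>\<^sub>v v \<longleftrightarrow>
           (\<forall>i<m. (z + of_real (\<beta> i)) * v $ i = of_real (\<alpha> i) * v $ \<sigma> i)"
proof -
  have "map_mat complex_of_real (feedback_mat m \<sigma> \<alpha> \<beta>) *\<^sub>v v = z \<cdot>\<^sub>v v \<longleftrightarrow>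
          (\<forall>i<m. of_real (\<alpha> i) * v $ \<sigma> i - of_real (\<beta> i) * v $ i = z * v $ i)"
    using assms feedback_mat_mult_vec[OF assms(1)] by (auto simp: vec_eq_iff feedback_mat_def)
  also have "\<dots> \<longleftrightarrow> (\<forall>i<m. (z + of_real (\<beta> i)) * v $ i = of_real (\<alpha> i) * v $ \<sigma> i)"
    by (intro all_cong) (auto simp: algebra_simps)
  finally show ?thesis .
qed

lemma eigenvalue_feedback_mat_iff_exists_solution:
  assumes \<sigma>: "\<And>i. i < m \<Longrightarrow> \<sigma> i < m"
  shows "eigenvalue (map_mat complex_of_real (feedback_mat m \<sigma> \<alpha> \<beta>)) z \<longleftrightarrow>
           (\<exists>v. (\<exists>i<m. v i \<noteq> 0) \<and> (\<forall>i<m. (z + of_real (\<beta> i)) * v i = of_real (\<alpha> i) * v (\<sigma> i)))"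
proof -
  note eigen_eq = feedback_mat_eigen_equation_iff[where \<sigma> = \<sigma>, OF _ \<sigma>]
  have dim: "dim_row (map_mat complex_of_real (feedback_mat m \<sigma> \<alpha> \<beta>)) = m"
    by (simp add: feedback_mat_def)
  have nonzero_iff: "v \<noteq> 0\<^sub>v m \<longleftrightarrow> (\<exists>i<m. v $ i \<noteq> 0)" if "v \<in> carrier_vec m" for v :: "complex vec"
    using that by (auto intro!: eq_vecI)
  show ?thesis
  proof
    assume "eigenvalue (map_mat complex_of_real (feedback_mat m \<sigma> \<alpha> \<beta>)) z"
    then obtain v where "v \<in> carrier_vec m" "v \<noteq> 0\<^sub>v m"
      and "\<forall>i<m. (z + of_real (\<beta> i)) * v $ i = of_real (\<alpha> i) * v $ \<sigma> i"
      unfolding eigenvalue_def eigenvector_def dim using eigen_eq by blast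
    then show "\<exists>v. (\<exists>i<m. v i \<noteq> 0) \<and> (\<forall>i<m. (z + of_real (\<beta> i)) * v i = of_real (\<alpha> i) * v (\<sigma> i))"
      using nonzero_iff by (intro exI[of _ "\<lambda>i. v $ i"]) blast
  next
    assume "\<exists>v. (\<exists>i<m. v i \<noteq> 0) \<and> (\<forall>i<m. (z + of_real (\<beta> i)) * v i = of_real (\<alpha> i) * v (\<sigma> i))"
    then obtain v i where "i < m" "v i \<noteq> 0"
      and v_eq: "\<forall>i<m. (z + of_real (\<beta> i)) * v i = of_real (\<alpha> i) * v (\<sigma> i)"
      by blast
    have "vec m v \<noteq> 0\<^sub>v m"
    proof
      assume "vec m v = 0\<^sub>v m"
      then have "vec m v $ i = 0" using \<open>i < m\<close> by simp
      with \<open>i < m\<close> \<open>v i \<noteq> 0\<close> show False by simp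
    qed
    moreover have "\<forall>i<m. (z + of_real (\<beta> i)) * vec m v $ i = of_real (\<alpha> i) * vec m v $ \<sigma> i"
      using v_eq \<sigma> by simp
    moreover note eigen_eq[where v = "vec m v", OF vec_carrier]
    ultimately have "eigenvector (map_mat complex_of_real (feedback_mat m \<sigma> \<alpha> \<beta>)) (vec m v) z"
      unfolding eigenvector_def dim by simp
    then show "eigenvalue (map_mat complex_of_real (feedback_mat m \<sigma> \<alpha> \<beta>)) z"
      unfolding eigenvalue_def by blast
  qed
qed

definition enumerates_cycle :: "nat \<Rightarrow> (nat \<Rightarrow> nat) \<Rightarrow> (nat \<Rightarrow> nat) \<Rightarrow> bool" where
  "enumerates_cycle m \<sigma> \<phi> \<longleftrightarrow>
     bij_betw \<phi> {..<m} {..<m} \<and> (\<forall>t<m. \<sigma> (\<phi> t) = \<phi> ((t + m - 1) mod m))"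

lemma exists_solution_iff_cyclic_solvable:
  fixes d e :: "nat \<Rightarrow> 'a::field"
  assumes cycle: "enumerates_cycle m \<sigma> \<phi>"
  shows "(\<exists>v. (\<exists>i<m. v i \<noteq> 0) \<and> (\<forall>i<m. d i * v i = e i * v (\<sigma> i))) \<longleftrightarrow>
           cyclic_solvable m (\<lambda>t. d (\<phi> t)) (\<lambda>t. e (\<phi> t))"
proof -
  have \<phi>: "bij_betw \<phi> {..<m} {..<m}" and \<sigma>\<phi>: "\<And>t. t < m \<Longrightarrow> \<sigma> (\<phi> t) = \<phi> ((t + m - 1) mod m)"
    using cycle unfolding enumerates_cycle_def by auto
  define \<psi> where "\<psi> = inv_into {..<m} \<phi>"
  have \<psi>: "\<psi> i < m" "\<phi> (\<psi> i) = i" if "i < m" for i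
    using that \<phi> bij_betw_inv_into_right[OF \<phi>] inv_into_into[of i \<phi> "{..<m}"]
    unfolding \<psi>_def bij_betw_def by auto
  have \<phi>_lt: "\<phi> t < m" if "t < m" for t using bij_betw_apply[OF \<phi>] that by simp
  have \<psi>_\<phi>: "\<psi> (\<phi> t) = t" if "t < m" for t
    using that \<phi> unfolding \<psi>_def by (simp add: bij_betw_inv_into_left)
  show ?thesis
  proof
    assume "\<exists>v. (\<exists>i<m. v i \<noteq> 0) \<and> (\<forall>i<m. d i * v i = e i * v (\<sigma> i))"
    then obtain v i where "i < m" "v i \<noteq> 0" and v: "\<forall>i<m. d i * v i = e i * v (\<sigma> i)"
      by blast
    then have "\<psi> i < m" "v (\<phi> (\<psi> i)) \<noteq> 0" using \<psi> by simp_all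
    moreover have "d (\<phi> t) * v (\<phi> t) = e (\<phi> t) * v (\<phi> ((t + m - 1) mod m))" if "t < m" for t
      using v \<phi>_lt[OF that] \<sigma>\<phi>[OF that] by simp
    ultimately show "cyclic_solvable m (\<lambda>t. d (\<phi> t)) (\<lambda>t. e (\<phi> t))"
      unfolding cyclic_solvable_def by (intro exI[of _ "\<lambda>t. v (\<phi> t)"]) blast
  next
    assume "cyclic_solvable m (\<lambda>t. d (\<phi> t)) (\<lambda>t. e (\<phi> t))"
    then obtain u t0 where "t0 < m" "u t0 \<noteq> 0"
      and u: "\<forall>t<m. d (\<phi> t) * u t = e (\<phi> t) * u ((t + m - 1) mod m)"
      unfolding cyclic_solvable_def by blast
    then have "\<phi> t0 < m" "u (\<psi> (\<phi> t0)) \<noteq> 0" using \<phi>_lt \<psi>_\<phi> by simp_all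
    moreover have "d i * u (\<psi> i) = e i * u (\<psi> (\<sigma> i))" if "i < m" for i
    proof -
      have "(\<psi> i + m - 1) mod m < m" using that by simp
      then have "\<psi> (\<sigma> i) = (\<psi> i + m - 1) mod m"
        using \<sigma>\<phi>[OF \<psi>(1)[OF that]] \<psi>(2)[OF that] \<psi>_\<phi> by simp
      then show ?thesis using u \<psi>[OF that] by metis
    qed
    ultimately show "\<exists>v. (\<exists>i<m. v i \<noteq> 0) \<and> (\<forall>i<m. d i * v i = e i * v (\<sigma> i))"
      by (intro exI[of _ "\<lambda>i. u (\<psi> i)"]) blast
  qed
qed

lemma eigenvalue_feedback_mat_iff:
  assumes cycle: "enumerates_cycle m \<sigma> \<phi>"
  shows "eigenvalue (map_mat complex_of_real (feedback_mat m \<sigma> \<alpha> \<beta>)) z \<longleftrightarrow>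
           cyclic_solvable m (\<lambda>t. z + of_real (\<beta> (\<phi> t))) (\<lambda>t. of_real (\<alpha> (\<phi> t)))"
proof -
  have \<phi>: "bij_betw \<phi> {..<m} {..<m}" and \<sigma>\<phi>: "\<And>t. t < m \<Longrightarrow> \<sigma> (\<phi> t) = \<phi> ((t + m - 1) mod m)"
    using cycle unfolding enumerates_cycle_def by auto
  have "\<sigma> i < m" if "i < m" for i
  proof -
    obtain t where "t < m" "i = \<phi> t" using \<open>i < m\<close> \<phi> by (auto simp: bij_betw_def)
    then show ?thesis using \<sigma>\<phi> bij_betw_apply[OF \<phi>] by simp
  qed
  then have "eigenvalue (map_mat complex_of_real (feedback_mat m \<sigma> \<alpha> \<beta>)) z \<longleftrightarrow>
      (\<exists>v. (\<exists>i<m. v i \<noteq> 0) \<and> (\<forall>i<m. (z + of_real (\<beta> i)) * v i = of_real (\<alpha> i) * v (\<sigma> i)))"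
    by (rule eigenvalue_feedback_mat_iff_exists_solution)
  then show ?thesis
    using exists_solution_iff_cyclic_solvable[OF cycle,
        of "\<lambda>i. z + of_real (\<beta> i)" "\<lambda>i. of_real (\<alpha> i)"]
    by simp
qed

lemma prod_le_norm_prod_add:
  fixes z :: complex
  assumes "0 \<le> Re z" and "\<And>j. j \<in> A \<Longrightarrow> 0 \<le> \<beta> j"
  shows "(\<Prod>j\<in>A. \<beta> j) \<le> norm (\<Prod>j\<in>A. z + of_real (\<beta> j))"
proof -
  have "\<beta> j \<le> norm (z + of_real (\<beta> j))" for j
    using assms(1) complex_Re_le_cmod[of "z + of_real (\<beta> j)"] by simp
  then have "(\<Prod>j\<in>A. \<beta> j) \<le> (\<Prod>j\<in>A. norm (z + of_real (\<beta> j)))"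
    using assms(2) by (intro prod_mono) auto
  then show ?thesis by (simp add: prod_norm)
qed

lemma exists_nonneg_prod_add_eq:
  fixes \<beta> :: "'a \<Rightarrow> real"
  assumes "finite A" "A \<noteq> {}" and \<beta>: "\<And>j. j \<in> A \<Longrightarrow> 0 \<le> \<beta> j"
    and le: "(\<Prod>j\<in>A. \<beta> j) \<le> K"
  shows "\<exists>x\<ge>0. (\<Prod>j\<in>A. x + \<beta> j) = K"
proof -
  define M where "M = 1 + K"
  have "0 \<le> (\<Prod>j\<in>A. \<beta> j)" using \<beta> by (rule prod_nonneg)
  then have "0 \<le> K" using le by linarith
  then have "1 \<le> M" by (simp add: M_def)
  have "card A \<ge> 1" using assms(1,2) by (simp add: Suc_le_eq card_gt_0_iff)
  have "K \<le> M ^ 1" by (simp add: M_def)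
  also have "\<dots> \<le> M ^ card A" using \<open>1 \<le> M\<close> \<open>card A \<ge> 1\<close> by (intro power_increasing)
  also have "\<dots> = (\<Prod>j\<in>A. M)" by simp
  also have "\<dots> \<le> (\<Prod>j\<in>A. M + \<beta> j)"
    using \<beta> \<open>1 \<le> M\<close> by (intro prod_mono) auto
  finally have "K \<le> (\<Prod>j\<in>A. M + \<beta> j)" .
  moreover have "continuous_on {0..M} (\<lambda>x. \<Prod>j\<in>A. x + \<beta> j)"
    by (intro continuous_intros)
  ultimately show ?thesis
    using IVT'[of "\<lambda>x. \<Prod>j\<in>A. x + \<beta> j" 0 K M] le \<open>1 \<le> M\<close> by force
qed

lemma feedback_mat_has_nonneg_eigenvalue:
  assumes m: "0 < m" and cycle: "enumerates_cycle m \<sigma> \<phi>"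
    and \<beta>: "\<And>j. j < m \<Longrightarrow> 0 \<le> \<beta> j"
    and le: "(\<Prod>j<m. \<beta> j) \<le> (\<Prod>j<m. \<alpha> j)"
  shows "\<exists>x\<ge>0. eigenvalue (map_mat complex_of_real (feedback_mat m \<sigma> \<alpha> \<beta>)) (of_real x)"
proof -
  have \<phi>: "bij_betw \<phi> {..<m} {..<m}" using cycle unfolding enumerates_cycle_def by auto
  obtain x where "0 \<le> x" and x: "(\<Prod>j<m. x + \<beta> j) = (\<Prod>j<m. \<alpha> j)"
    using exists_nonneg_prod_add_eq[of "{..<m}" \<beta> "\<Prod>j<m. \<alpha> j"] \<beta> le m by force
  have "(\<Prod>j<m. of_real x + of_real (\<beta> j)) = (\<Prod>j<m. of_real (\<alpha> j) :: complex)"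
    using arg_cong[OF x, of complex_of_real] by simp
  then have "cyclic_solvable m (\<lambda>t. complex_of_real x + of_real (\<beta> (\<phi> t))) (\<lambda>t. of_real (\<alpha> (\<phi> t)))"
    using prod.reindex_bij_betw[OF \<phi>, of "\<lambda>j. complex_of_real x + of_real (\<beta> j)"]
      prod.reindex_bij_betw[OF \<phi>, of "\<lambda>j. complex_of_real (\<alpha> j)"]
    by (intro cyclic_solvable_if_prod_eq[OF m]) simp
  then show ?thesis unfolding eigenvalue_feedback_mat_iff[OF cycle] using \<open>0 \<le> x\<close> by blast
qed

lemma feedback_mat_eigenvalue_Re_neg:
  assumes cycle: "enumerates_cycle m \<sigma> \<phi>"
    and \<beta>: "\<And>j. j < m \<Longrightarrow> 0 \<le> \<beta> j"
    and \<alpha>: "0 \<le> (\<Prod>j<m. \<alpha> j)"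
    and less: "(\<Prod>j<m. \<alpha> j) < (\<Prod>j<m. \<beta> j)"
    and z: "eigenvalue (map_mat complex_of_real (feedback_mat m \<sigma> \<alpha> \<beta>)) z"
  shows "Re z < 0"
proof (rule ccontr)
  assume "\<not> Re z < 0"
  then have "0 \<le> Re z" by simp
  have \<phi>: "bij_betw \<phi> {..<m} {..<m}" using cycle unfolding enumerates_cycle_def by auto
  have "0 < \<beta> j" if "j < m" for j
  proof -
    have "(\<Prod>j<m. \<beta> j) \<noteq> 0" using less \<alpha> by linarith
    then have "\<beta> j \<noteq> 0" using that by auto
    then show ?thesis using \<beta>[OF that] by simp
  qed
  then have "0 < Re (z + of_real (\<beta> (\<phi> t)))" if "t < m" for t
    using \<open>0 \<le> Re z\<close> bij_betw_apply[OF \<phi>] that by fastforce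
  then have nonzero: "z + of_real (\<beta> (\<phi> t)) \<noteq> 0" if "t < m" for t
    using that by (metis less_irrefl zero_complex.sel(1))
  have "cyclic_solvable m (\<lambda>t. z + of_real (\<beta> (\<phi> t))) (\<lambda>t. of_real (\<alpha> (\<phi> t)))"
    using z unfolding eigenvalue_feedback_mat_iff[OF cycle] .
  then have "(\<Prod>t<m. z + of_real (\<beta> (\<phi> t))) = (\<Prod>t<m. complex_of_real (\<alpha> (\<phi> t)))"
    by (rule cyclic_solvable_imp_prod_eq) (rule nonzero)
  then have "(\<Prod>j<m. z + of_real (\<beta> j)) = (\<Prod>j<m. of_real (\<alpha> j))"
    using prod.reindex_bij_betw[OF \<phi>, of "\<lambda>j. z + of_real (\<beta> j)"]
      prod.reindex_bij_betw[OF \<phi>, of "\<lambda>j. complex_of_real (\<alpha> j)"] by simp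
  then have "(\<Prod>j<m. \<beta> j) \<le> norm (complex_of_real (\<Prod>j<m. \<alpha> j))"
    using prod_le_norm_prod_add[OF \<open>0 \<le> Re z\<close>, of "{..<m}" \<beta>] \<beta> by simp
  also have "norm (complex_of_real (\<Prod>j<m. \<alpha> j)) = (\<Prod>j<m. \<alpha> j)"
    using \<alpha> by (simp only: norm_of_real abs_of_nonneg)
  finally show False using less by simp
qed

theorem feedback_mat_eigenvalues_Re_neg_iff:
  assumes "0 < m" and cycle: "enumerates_cycle m \<sigma> \<phi>"
    and \<beta>: "\<And>j. j < m \<Longrightarrow> 0 \<le> \<beta> j"
    and \<alpha>: "0 \<le> (\<Prod>j<m. \<alpha> j)"
  shows "(\<forall>z. eigenvalue (map_mat complex_of_real (feedback_mat m \<sigma> \<alpha> \<beta>)) z \<longrightarrow> Re z < 0)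
           \<longleftrightarrow> (\<Prod>j<m. \<alpha> j) < (\<Prod>j<m. \<beta> j)"
proof
  assume stable: "\<forall>z. eigenvalue (map_mat complex_of_real (feedback_mat m \<sigma> \<alpha> \<beta>)) z \<longrightarrow> Re z < 0"
  show "(\<Prod>j<m. \<alpha> j) < (\<Prod>j<m. \<beta> j)"
  proof (rule ccontr)
    assume "\<not> ?thesis"
    then obtain x where "0 \<le> x"
      and "eigenvalue (map_mat complex_of_real (feedback_mat m \<sigma> \<alpha> \<beta>)) (of_real x)"
      using feedback_mat_has_nonneg_eigenvalue[where \<alpha> = \<alpha> and \<beta> = \<beta>, OF \<open>0 < m\<close> cycle \<beta>]
      by (auto simp: not_less)
    then have "Re (complex_of_real x) < 0" using stable by blast
    with \<open>0 \<le> x\<close> show False by simp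
  qed
next
  assume less: "(\<Prod>j<m. \<alpha> j) < (\<Prod>j<m. \<beta> j)"
  show "\<forall>z. eigenvalue (map_mat complex_of_real (feedback_mat m \<sigma> \<alpha> \<beta>)) z \<longrightarrow> Re z < 0"
    using feedback_mat_eigenvalue_Re_neg[where \<alpha> = \<alpha> and \<beta> = \<beta>, OF cycle \<beta> \<alpha> less] by blast
qed

section \<open>The repressilator\<close>

lemma prod_lessThan_double:
  "(\<Prod>j<2 * (n::nat). f j) = (\<Prod>i<n. f i * f (n + i) :: 'a::comm_monoid_mult)"
proof -
  have "(\<Prod>j<2 * n. f j) = (\<Prod>j<n. f j) * (\<Prod>j\<in>{n..<n + n}. f j)"
    by (simp add: mult_2 atLeast0LessThan[symmetric] prod.atLeastLessThan_concat)
  also have "(\<Prod>j\<in>{n..<n + n}. f j) = (\<Prod>i<n. f (n + i))"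
    using prod.shift_bounds_nat_ivl[of f 0 n n] by (simp add: atLeast0LessThan add.commute)
  finally show ?thesis by (simp add: prod.distrib)
qed

lemma prod_nonneg_if_even_card_nonpos:
  fixes f :: "'a \<Rightarrow> 'b::linordered_idom"
  assumes "even (card A)" and "\<And>x. x \<in> A \<Longrightarrow> f x \<le> 0"
  shows "0 \<le> (\<Prod>x\<in>A. f x)"
proof -
  have "(\<Prod>x\<in>A. f x) = (\<Prod>x\<in>A. - (- f x))" by simp
  also have "\<dots> = (\<Prod>x\<in>A. - f x)" using assms(1) by (simp only: prod_uminus) simp
  also have "\<dots> \<ge> 0" using assms(2) by (intro prod_nonneg) auto
  finally show ?thesis .
qed

lemma C1_nonneg_has_real_derivative:
  assumes "C1_nonneg f" "0 < x"
  shows "(f has_real_derivative deriv f x) (at x)"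
proof -
  obtain f' where "\<forall>x\<ge>0. (f has_real_derivative f' x) (at x within {0..})"
    using assms(1) unfolding C1_nonneg_def by blast
  then have "(f has_real_derivative f' x) (at x within {0..})" using assms(2) by simp
  moreover have "at x within {0..} = at x"
    using assms(2) by (intro at_within_interior) simp
  ultimately have "(f has_real_derivative f' x) (at x)" by simp
  then show ?thesis by (metis DERIV_imp_deriv)
qed

lemma C1_nonneg_deriv_nonneg:
  assumes "C1_nonneg f" "strict_mono_on {0<..} f" "0 < x"
  shows "0 \<le> deriv f x"
  using mono_on_imp_deriv_nonneg[OF strict_mono_on_imp_mono_on[OF assms(2)]
      C1_nonneg_has_real_derivative[OF assms(1,3)]] assms(3) by (simp add: interior_open)

lemma C1_nonneg_deriv_nonpos:
  assumes "C1_nonneg f" "\<And>x y. 0 \<le> x \<Longrightarrow> x < y \<Longrightarrow> f y < f x" "0 < x"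
  shows "deriv f x \<le> 0"
proof -
  have "mono_on {0<..} (\<lambda>x. - f x)"
    using assms(2) by (auto intro!: mono_onI simp: le_less)
  moreover have "((\<lambda>x. - f x) has_real_derivative - deriv f x) (at x)"
    using C1_nonneg_has_real_derivative[OF assms(1,3)] by (rule DERIV_minus)
  ultimately show ?thesis using mono_on_imp_deriv_nonneg assms(3) by (fastforce simp: interior_open)
qed

lemma deriv_fun_upd_diff:
  fixes x :: "nat \<Rightarrow> real"
  assumes "p \<noteq> q"
    and f: "(f has_real_derivative f') (at (x p))"
    and g: "(g has_real_derivative g') (at (x q))"
  shows "deriv (\<lambda>t. f ((x(j := t)) p) - g ((x(j := t)) q)) (x j) =
           (if j = p then f' else 0) - (if j = q then g' else 0)"
proof -
  consider "j = p" | "j = q" | "j \<noteq> p" "j \<noteq> q" by blast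
  then show ?thesis
  proof cases
    case 1
    have "((\<lambda>t. f t - g (x q)) has_real_derivative f' - 0) (at (x p))"
      by (intro DERIV_diff f DERIV_const)
    then show ?thesis using 1 assms(1) by (simp add: DERIV_imp_deriv)
  next
    case 2
    have "((\<lambda>t. f (x p) - g t) has_real_derivative 0 - g') (at (x q))"
      by (intro DERIV_diff g DERIV_const)
    then show ?thesis using 2 assms(1) by (simp add: DERIV_imp_deriv)
  qed simp
qed

(* The coordinate that drives the production of coordinate i: p_(i-1) for r_i, and r_i for p_i. *)
definition repressilator_source :: "nat \<Rightarrow> nat \<Rightarrow> nat" where
  "repressilator_source n i = (if i < n then n + (i + n - 1) mod n else i - n)"

definition repressilator_gain ::
  "nat \<Rightarrow> (nat \<Rightarrow> real \<Rightarrow> real) \<Rightarrow> (nat \<Rightarrow> real \<Rightarrow> real) \<Rightarrow> (nat \<Rightarrow> real) \<Rightarrow> nat \<Rightarrow> real" where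
  "repressilator_gain n a k x i =
     (if i < n then deriv (a i) (x (n + (i + n - 1) mod n)) else deriv (k (i - n)) (x (i - n)))"

definition repressilator_decay ::
  "nat \<Rightarrow> (nat \<Rightarrow> real \<Rightarrow> real) \<Rightarrow> (nat \<Rightarrow> real \<Rightarrow> real) \<Rightarrow> (nat \<Rightarrow> real) \<Rightarrow> nat \<Rightarrow> real" where
  "repressilator_decay n dr dp x i =
     (if i < n then deriv (dr i) (x i) else deriv (dp (i - n)) (x i))"

lemma jacobian_repressilator:
  assumes a: "\<And>i. i < n \<Longrightarrow> C1_nonneg (a i)" and dr: "\<And>i. i < n \<Longrightarrow> C1_nonneg (dr i)"
    and dp: "\<And>i. i < n \<Longrightarrow> C1_nonneg (dp i)" and k: "\<And>i. i < n \<Longrightarrow> C1_nonneg (k i)"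
    and pos: "\<And>j. j < 2 * n \<Longrightarrow> 0 < x j"
  shows "jacobian (2 * n) (repressilator_field n a dr dp k) x =
           feedback_mat (2 * n) (repressilator_source n) (repressilator_gain n a k x)
             (repressilator_decay n dr dp x)"
proof (rule eq_matI)
  fix i j assume "i < dim_row (feedback_mat (2 * n) (repressilator_source n)
      (repressilator_gain n a k x) (repressilator_decay n dr dp x))"
    and "j < dim_col (feedback_mat (2 * n) (repressilator_source n)
      (repressilator_gain n a k x) (repressilator_decay n dr dp x))"
  then have i: "i < 2 * n" and j: "j < 2 * n" by (simp_all add: feedback_mat_def)
  show "jacobian (2 * n) (repressilator_field n a dr dp k) x $$ (i, j) =
          feedback_mat (2 * n) (repressilator_source n) (repressilator_gain n a k x)
             (repressilator_decay n dr dp x) $$ (i, j)"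
  proof (cases "i < n")
    case True
    define p where "p = n + (i + n - 1) mod n"
    have "p < 2 * n" "p \<noteq> i" using True by (auto simp: p_def)
    moreover have "(\<lambda>t. repressilator_field n a dr dp k (x(j := t)) i) =
                     (\<lambda>t. a i ((x(j := t)) p) - dr i ((x(j := t)) i))"
      using True by (simp add: repressilator_field_def p_def)
    ultimately show ?thesis
      using i j True pos a dr deriv_fun_upd_diff[OF \<open>p \<noteq> i\<close> C1_nonneg_has_real_derivative
          C1_nonneg_has_real_derivative, of "a i" x "dr i" j]
      by (simp add: jacobian_def feedback_mat_def repressilator_source_def repressilator_gain_def
          repressilator_decay_def p_def)
  next
    case False
    have "i - n \<noteq> i" "i - n < 2 * n" using False i by auto
    moreover have "(\<lambda>t. repressilator_field n a dr dp k (x(j := t)) i) =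
                     (\<lambda>t. k (i - n) ((x(j := t)) (i - n)) - dp (i - n) ((x(j := t)) i))"
      using False by (simp add: repressilator_field_def)
    ultimately show ?thesis
      using i j False pos k dp deriv_fun_upd_diff[OF \<open>i - n \<noteq> i\<close> C1_nonneg_has_real_derivative
          C1_nonneg_has_real_derivative, of "k (i - n)" x "dp (i - n)" j]
      by (simp add: jacobian_def feedback_mat_def repressilator_source_def repressilator_gain_def
          repressilator_decay_def)
  qed
qed (simp_all add: jacobian_def feedback_mat_def)

(* Lists the coordinates in the order r_1, p_1, r_2, p_2, ... in which each one drives the next. *)
definition interleave :: "nat \<Rightarrow> nat \<Rightarrow> nat" where
  "interleave n t = (if even t then t div 2 else n + t div 2)"

lemma bij_betw_interleave: "bij_betw (interleave n) {..<2 * n} {..<2 * n}"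
  by (rule bij_betw_byWitness[where f' = "\<lambda>j. if j < n then 2 * j else 2 * (j - n) + 1"])
    (auto simp: interleave_def)

lemma repressilator_source_interleave:
  assumes "t < 2 * n"
  shows "repressilator_source n (interleave n t) = interleave n ((t + 2 * n - 1) mod (2 * n))"
proof (cases "even t")
  case True
  then obtain i where "t = 2 * i" "i < n" using assms by (auto elim!: evenE)
  moreover have "(t + 2 * n - 1) mod (2 * n) = (if i = 0 then 2 * (n - 1) + 1 else 2 * (i - 1) + 1)"
    using cyclic_pred_eq[OF assms] \<open>t = 2 * i\<close> \<open>i < n\<close> by auto
  ultimately show ?thesis
    using cyclic_pred_eq[of i n] by (auto simp: interleave_def repressilator_source_def)
next
  case False
  then obtain i where "t = 2 * i + 1" "i < n" using assms by (auto elim!: oddE)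
  moreover have "(t + 2 * n - 1) mod (2 * n) = 2 * i"
    using cyclic_pred_eq[OF assms] \<open>t = 2 * i + 1\<close> by auto
  ultimately show ?thesis by (auto simp: interleave_def repressilator_source_def)
qed

lemma prod_repressilator_decay:
  "(\<Prod>j<2 * n. repressilator_decay n dr dp x j) = total_degradation n dr dp x"
  by (simp add: prod_lessThan_double repressilator_decay_def total_degradation_def)

lemma prod_repressilator_gain:
  "(\<Prod>j<2 * n. repressilator_gain n a k x j) = total_synthesis n a k x"
  unfolding prod_lessThan_double
  by (simp add: repressilator_gain_def total_synthesis_def mult.commute)

lemma enumerates_cycle_interleave:
  "enumerates_cycle (2 * n) (repressilator_source n) (interleave n)"
  unfolding enumerates_cycle_def using bij_betw_interleave repressilator_source_interleave by blast

lemma repressilator_decay_nonneg: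
  assumes "\<And>i. i < n \<Longrightarrow> C1_nonneg (dr i)" "\<And>i. i < n \<Longrightarrow> strict_mono_on {0<..} (dr i)"
    and "\<And>i. i < n \<Longrightarrow> C1_nonneg (dp i)" "\<And>i. i < n \<Longrightarrow> strict_mono_on {0<..} (dp i)"
    and "\<And>j. j < 2 * n \<Longrightarrow> 0 < x j"
  shows "\<And>j. j < 2 * n \<Longrightarrow> 0 \<le> repressilator_decay n dr dp x j"
  using assms C1_nonneg_deriv_nonneg by (auto simp: repressilator_decay_def)

lemma total_synthesis_nonneg:
  assumes "even n"
    and a: "\<And>i. i < n \<Longrightarrow> C1_nonneg (a i)"
    and a_decr: "\<And>i x y. i < n \<Longrightarrow> 0 \<le> x \<Longrightarrow> x < y \<Longrightarrow> a i y < a i x"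
    and k: "\<And>i. i < n \<Longrightarrow> C1_nonneg (k i)" and k_incr: "\<And>i. i < n \<Longrightarrow> strict_mono_on {0<..} (k i)"
    and pos: "\<And>j. j < 2 * n \<Longrightarrow> 0 < x j"
  shows "0 \<le> total_synthesis n a k x"
  unfolding total_synthesis_def
proof (rule prod_nonneg_if_even_card_nonpos)
  fix i assume "i \<in> {..<n}"
  then have "i < n" "n + (i + n - 1) mod n < 2 * n" by auto
  then show "deriv (k i) (x i) * deriv (a i) (x (n + (i + n - 1) mod n)) \<le> 0"
    using pos k k_incr a a_decr
    by (intro mult_nonneg_nonpos C1_nonneg_deriv_nonneg C1_nonneg_deriv_nonpos) auto
qed (use \<open>even n\<close> in simp)

theorem theorem2:
  fixes n :: nat
    and a dr dp k :: "nat \<Rightarrow> real \<Rightarrow> real"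
    and xs :: "nat \<Rightarrow> real"
  assumes "n \<ge> 2" and "even n"
    and a_C1: "\<And>i. i < n \<Longrightarrow> C1_nonneg (a i)"
    and a_nonneg: "\<And>i x. i < n \<Longrightarrow> 0 \<le> x \<Longrightarrow> 0 \<le> a i x"
    and a_decr: "\<And>i x y. i < n \<Longrightarrow> 0 \<le> x \<Longrightarrow> x < y \<Longrightarrow> a i y < a i x"
    and a_0: "\<And>i. i < n \<Longrightarrow> a i 0 > 0"
    and dr_C1: "\<And>i. i < n \<Longrightarrow> C1_nonneg (dr i)"
    and dr_0: "\<And>i. i < n \<Longrightarrow> dr i 0 = 0"
    and dr_incr: "\<And>i. i < n \<Longrightarrow> strict_mono_on {0<..} (dr i)"
    and dp_C1: "\<And>i. i < n \<Longrightarrow> C1_nonneg (dp i)"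
    and dp_0: "\<And>i. i < n \<Longrightarrow> dp i 0 = 0"
    and dp_incr: "\<And>i. i < n \<Longrightarrow> strict_mono_on {0<..} (dp i)"
    and k_C1: "\<And>i. i < n \<Longrightarrow> C1_nonneg (k i)"
    and k_0: "\<And>i. i < n \<Longrightarrow> k i 0 = 0"
    and k_incr: "\<And>i. i < n \<Longrightarrow> strict_mono_on {0<..} (k i)"
    and pos: "\<And>j. j < 2 * n \<Longrightarrow> xs j > 0"
    and steady: "\<And>j. j < 2 * n \<Longrightarrow> repressilator_field n a dr dp k xs j = 0"
  shows "stable_steady_state (2 * n) (repressilator_field n a dr dp k) xs
         \<longleftrightarrow> total_degradation n dr dp xs > total_synthesis n a k xs"
proof -
  \<comment> \<open>Only the signs of the derivatives at \<open>xs\<close> matter: the steady-state equations and the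
    values at 0 are not needed.\<close>
  have jacobian: "jacobian (2 * n) (repressilator_field n a dr dp k) xs =
      feedback_mat (2 * n) (repressilator_source n) (repressilator_gain n a k xs)
        (repressilator_decay n dr dp xs)"
    using a_C1 dr_C1 dp_C1 k_C1 pos by (rule jacobian_repressilator)
  show ?thesis
    unfolding stable_steady_state_def jacobian
      prod_repressilator_decay[symmetric] prod_repressilator_gain[symmetric]
  proof (rule feedback_mat_eigenvalues_Re_neg_iff[OF _ enumerates_cycle_interleave])
    show "0 < 2 * n" using \<open>n \<ge> 2\<close> by simp
    show "\<And>j. j < 2 * n \<Longrightarrow> 0 \<le> repressilator_decay n dr dp xs j"
      using dr_C1 dr_incr dp_C1 dp_incr pos by (rule repressilator_decay_nonneg)
    show "0 \<le> (\<Prod>j<2 * n. repressilator_gain n a k xs j)"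
      unfolding prod_repressilator_gain using \<open>even n\<close> a_C1 a_decr k_C1 k_incr pos
      by (rule total_synthesis_nonneg)
  qed
qed

end
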